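(* Let $k\ge2$ and $p=p(n)\in[0,1]$. For every $\varepsilon>0$, with probability tending to $1$ as $n\to\infty$, the random cochain $a$ used to construct $Y^k(n,p)$ is a $\mathbb Z_2$-cocycle of $Y^k(n,p)$ (i.e. $\delta a=0$) and satisfies $\|[a]\|\ge\frac12-\varepsilon$; in particular $\tilde H^{k-1}(Y^k(n,p);\mathbb Z_2)\ne0$.
   Context: $Y^k(n,p)$ is the random $k$-dimensional complex on vertex set $[n]$ with complete $(k-1)$-skeleton constructed as follows: choose $a:\binom{[n]}{k}\to\mathbb Z_2$ with values independent and uniform; call $H\in\binom{[n]}{k+1}$ good if $H$ contains an even number of $k$-subsets $F$ with $a(F)=1$; each good $H$ is added as a $k$-face independently with probability $p$. Faces are oriented by a fixed vertex order; over $\mathbb Z_2$ the coboundary is $(\delta f)(H)=\sum_{G\subset H,|G|=|H|-1}f(G)$. For $f\in C^{i}(X;\mathbb Z_2)$, $\|f\|=|\{F\in X_i:f(F)=1\}|/|X_i|$ and $\|[f]\|=\min\{\|f+\delta g\|:g\in C^{i-1}(X;\mathbb Z_2)\}$. *)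

theory Defs
  imports "HOL-Probability.Probability"
begin

text \<open>Faces are finite subsets of the vertex set [n] = {1..n}; an i-face has i+1 vertices.
  Z_2-valued cochains are represented as predicates (True = 1, False = 0), addition is xor.\<close>

definition ksub :: "nat \<Rightarrow> nat \<Rightarrow> nat set set" where
  "ksub n j = {F. F \<subseteq> {1..n} \<and> card F = j}"

definition cobdry :: "(nat set \<Rightarrow> bool) \<Rightarrow> nat set \<Rightarrow> bool" where
  "cobdry f H = odd (card {G. G \<subseteq> H \<and> card G + 1 = card H \<and> f G})"

definition good :: "nat \<Rightarrow> (nat set \<Rightarrow> bool) \<Rightarrow> nat set \<Rightarrow> bool" where
  "good k a H = even (card {F. F \<subseteq> H \<and> card F = k \<and> a F})"

text \<open>The random model: the pair (a, X_k), where a is uniform on the k-subsets of [n]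
  (independent fair bits, False outside) and each good (k+1)-subset is a k-face
  independently with probability p. The complex has complete (k-1)-skeleton.\<close>
definition Ymodel :: "nat \<Rightarrow> nat \<Rightarrow> real \<Rightarrow> ((nat set \<Rightarrow> bool) \<times> nat set set) pmf" where
  "Ymodel k n p =
     do { a \<leftarrow> Pi_pmf (ksub n k) False (\<lambda>_. bernoulli_pmf (1/2));
          S \<leftarrow> Pi_pmf {H \<in> ksub n (k+1). good k a H} False (\<lambda>_. bernoulli_pmf p);
          return_pmf (a, {H. S H}) }"

definition is_cocycle :: "nat set set \<Rightarrow> (nat set \<Rightarrow> bool) \<Rightarrow> bool" where
  "is_cocycle Xk f \<longleftrightarrow> (\<forall>H\<in>Xk. \<not> cobdry f H)"

text \<open>Normalized Hamming norm of a (k-1)-cochain, X_{k-1} = ksub n k.\<close>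
definition cnorm :: "nat \<Rightarrow> nat \<Rightarrow> (nat set \<Rightarrow> bool) \<Rightarrow> real" where
  "cnorm n k f = real (card {F\<in>ksub n k. f F}) / real (card (ksub n k))"

text \<open>(k-2)-cochains: functions supported on X_{k-2} = ksub n (k-1).\<close>
definition cochains :: "nat \<Rightarrow> nat \<Rightarrow> (nat set \<Rightarrow> bool) set" where
  "cochains n j = {g. \<forall>G. g G \<longrightarrow> G \<in> ksub n j}"

definition class_norm :: "nat \<Rightarrow> nat \<Rightarrow> (nat set \<Rightarrow> bool) \<Rightarrow> real" where
  "class_norm n k f = (INF g\<in>cochains n (k-1). cnorm n k (\<lambda>F. f F \<noteq> cobdry g F))"

text \<open>Reduced cohomology H^{k-1}(X;Z_2) = ker delta / im delta is nonzero iff some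
  (k-1)-cocycle is not a coboundary (on X_{k-1}).\<close>
definition cohom_nonzero :: "nat \<Rightarrow> nat \<Rightarrow> nat set set \<Rightarrow> bool" where
  "cohom_nonzero n k Xk \<longleftrightarrow>
     (\<exists>f\<in>cochains n k. is_cocycle Xk f \<and>
        (\<forall>g\<in>cochains n (k-1). \<exists>F\<in>ksub n k. f F \<noteq> cobdry g F))"

end

theory Submission
  imports Defs "HOL-Real_Asymp.Real_Asymp"
begin

text \<open>The faces of \<open>Y\<^sup>k(n,p)\<close> are all good, so \<open>a\<close> is a cocycle by construction; and the
  distribution of \<open>a\<close> is uniform, independently of the random faces. For a fixed
  \<open>(k-2)\<close>-cochain \<open>g\<close>, the number of \<open>(k-1)\<close>-faces on which \<open>a\<close> and \<open>\<delta>g\<close> differ is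
  binomial \<open>Bin(N, 1/2)\<close> with \<open>N = n choose k\<close>, so by Hoeffding it falls below \<open>(1/2 - e)N\<close>
  with probability at most \<open>exp(-2e\<^sup>2N)\<close>. A union bound over the \<open>2\<^sup>M\<close> cochains \<open>g\<close>,
  \<open>M = n choose (k-1)\<close>, costs a factor that is negligible because \<open>M/N = k/(n-k+1) \<rightarrow> 0\<close>.\<close>

lemma map_pmf_bernoulli_half_xor:
  "map_pmf (\<lambda>b. b \<noteq> d) (bernoulli_pmf (1/2)) = bernoulli_pmf (1/2)"
proof (rule pmf_eqI)
  fix x :: bool
  have "(\<lambda>b. b \<noteq> d) -` {x} = {x \<noteq> d}" by auto
  then show "pmf (map_pmf (\<lambda>b. b \<noteq> d) (bernoulli_pmf (1/2))) x = pmf (bernoulli_pmf (1/2)) x"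
    by (simp add: pmf_map measure_pmf_single)
qed

lemma map_pmf_fair_coins_xor:
  assumes "finite A"
  shows "map_pmf (\<lambda>a x. if x \<in> A then a x \<noteq> c x else False) (Pi_pmf A False (\<lambda>_. bernoulli_pmf (1/2)))
         = Pi_pmf A False (\<lambda>_. bernoulli_pmf (1/2))"
proof -
  have "Pi_pmf A False (\<lambda>_. bernoulli_pmf (1/2))
        = Pi_pmf A False (\<lambda>x. bind_pmf (bernoulli_pmf (1/2)) (\<lambda>b. return_pmf (b \<noteq> c x)))"
    by (rule Pi_pmf_cong) (simp_all only: map_pmf_def[symmetric] map_pmf_bernoulli_half_xor)
  also have "\<dots> = bind_pmf (Pi_pmf A False (\<lambda>_. bernoulli_pmf (1/2)))
                    (\<lambda>a. Pi_pmf A False (\<lambda>x. return_pmf (a x \<noteq> c x)))"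
    by (rule Pi_pmf_bind[OF assms])
  also have "\<dots> = map_pmf (\<lambda>a x. if x \<in> A then a x \<noteq> c x else False)
                    (Pi_pmf A False (\<lambda>_. bernoulli_pmf (1/2)))"
    using assms by (simp add: map_pmf_def)
  finally show ?thesis by simp
qed

lemma map_pmf_fair_coins_disagreements:
  assumes "finite A"
  shows "map_pmf (\<lambda>a. card {x\<in>A. a x \<noteq> c x}) (Pi_pmf A False (\<lambda>_. bernoulli_pmf (1/2)))
         = binomial_pmf (card A) (1/2)"
proof -
  let ?P = "Pi_pmf A False (\<lambda>_. bernoulli_pmf (1/2))"
  let ?xor = "\<lambda>a x. if x \<in> A then a x \<noteq> c x else False"
  have "map_pmf (\<lambda>a. card {x\<in>A. a x \<noteq> c x}) ?P = map_pmf (\<lambda>f. card {x\<in>A. f x}) (map_pmf ?xor ?P)"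
    unfolding pmf.map_comp o_def by (intro map_pmf_cong refl arg_cong[where f = card]) auto
  also have "\<dots> = binomial_pmf (card A) (1/2)"
    by (simp add: map_pmf_fair_coins_xor assms) (rule binomial_pmf_altdef'[symmetric], use assms in auto)
  finally show ?thesis .
qed

lemma prob_fair_coins_few_disagreements:
  fixes e :: real
  assumes "finite A" "A \<noteq> {}" "e \<ge> 0"
  shows "measure_pmf.prob (Pi_pmf A False (\<lambda>_. bernoulli_pmf (1/2)))
           {a. real (card {x\<in>A. a x \<noteq> c x}) < (1/2 - e) * card A} \<le> exp (-2 * e\<^sup>2 * card A)"
proof -
  let ?N = "card A"
  have N: "?N > 0" using assms by (simp add: card_gt_0_iff)
  have "measure_pmf.prob (Pi_pmf A False (\<lambda>_. bernoulli_pmf (1/2)))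
          {a. real (card {x\<in>A. a x \<noteq> c x}) < (1/2 - e) * ?N}
        = measure_pmf.prob (binomial_pmf ?N (1/2)) {j. real j < (1/2 - e) * ?N}"
    by (simp flip: map_pmf_fair_coins_disagreements[OF assms(1), of c])
  also have "\<dots> \<le> measure_pmf.prob (binomial_pmf ?N (1/2)) {j. real j \<le> ?N * (1/2) - e * ?N}"
    by (rule measure_pmf.finite_measure_mono) (auto simp: algebra_simps)
  also have "\<dots> \<le> exp (-2 * (e * ?N)\<^sup>2 / ?N)"
    by (rule binomial_distribution.prob_le) (use N assms(3) in \<open>auto simp: binomial_distribution_def\<close>)
  also have "-2 * (e * ?N)\<^sup>2 / ?N = -2 * e\<^sup>2 * ?N"
    using N by (simp add: power2_eq_square)
  finally show ?thesis .
qed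

lemma prob_fair_coins_near_some:
  fixes e :: real
  assumes "finite A" "A \<noteq> {}" "e \<ge> 0" "finite I"
  shows "measure_pmf.prob (Pi_pmf A False (\<lambda>_. bernoulli_pmf (1/2)))
           {a. \<exists>i\<in>I. real (card {x\<in>A. a x \<noteq> c i x}) < (1/2 - e) * card A}
         \<le> card I * exp (-2 * e\<^sup>2 * card A)"
proof -
  let ?P = "Pi_pmf A False (\<lambda>_. bernoulli_pmf (1/2))"
  let ?near = "\<lambda>i. {a. real (card {x\<in>A. a x \<noteq> c i x}) < (1/2 - e) * card A}"
  have "measure_pmf.prob ?P {a. \<exists>i\<in>I. real (card {x\<in>A. a x \<noteq> c i x}) < (1/2 - e) * card A}
        = measure_pmf.prob ?P (\<Union>i\<in>I. ?near i)"
    by (rule arg_cong[where f = "measure_pmf.prob ?P"]) blast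
  also have "\<dots> \<le> (\<Sum>i\<in>I. measure_pmf.prob ?P (?near i))"
    by (rule measure_pmf.finite_measure_subadditive_finite) (use assms(4) in auto)
  also have "\<dots> \<le> (\<Sum>i\<in>I. exp (-2 * e\<^sup>2 * card A))"
    by (intro sum_mono prob_fair_coins_few_disagreements assms(1-3))
  finally show ?thesis by simp
qed

lemma finite_ksub: "finite (ksub n j)"
  unfolding ksub_def by (rule finite_subset[of _ "Pow {1..n}"]) auto

lemma card_ksub: "card (ksub n j) = n choose j"
  unfolding ksub_def using n_subsets[of "{1..n}" j] by simp

lemma cochains_eq_image_Pow: "cochains n j = (\<lambda>S G. G \<in> S) ` Pow (ksub n j)"
proof
  show "cochains n j \<subseteq> (\<lambda>S G. G \<in> S) ` Pow (ksub n j)"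
  proof
    fix g assume "g \<in> cochains n j"
    then have "{G. g G} \<in> Pow (ksub n j)" by (auto simp: cochains_def)
    moreover have "g = (\<lambda>G. G \<in> {G. g G})" by auto
    ultimately show "g \<in> (\<lambda>S G. G \<in> S) ` Pow (ksub n j)" by blast
  qed
qed (auto simp: cochains_def)

lemma finite_cochains: "finite (cochains n j)"
  unfolding cochains_eq_image_Pow by (simp add: finite_ksub)

lemma card_cochains_le: "card (cochains n j) \<le> 2 ^ (n choose j)"
  unfolding cochains_eq_image_Pow
  using card_image_le[of "Pow (ksub n j)" "\<lambda>S G. G \<in> S"]
  by (simp add: finite_ksub card_Pow card_ksub)

lemma Pi_pmf_ksub_in_cochains:
  "a \<in> set_pmf (Pi_pmf (ksub n j) False q) \<Longrightarrow> a \<in> cochains n j"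
  using set_Pi_pmf_subset[OF finite_ksub] by (fastforce simp: cochains_def)

lemma map_fst_Ymodel:
  "map_pmf fst (Ymodel k n q) = Pi_pmf (ksub n k) False (\<lambda>_. bernoulli_pmf (1/2))"
  unfolding Ymodel_def by (simp add: map_bind_pmf bind_return_pmf' bind_pmf_const)

lemma set_pmf_Ymodel_good:
  assumes "(a, X) \<in> set_pmf (Ymodel k n q)" "H \<in> X"
  shows "H \<in> ksub n (k+1)" "good k a H"
proof -
  let ?Good = "{H \<in> ksub n (k+1). good k a H}"
  obtain S where S: "S \<in> set_pmf (Pi_pmf ?Good False (\<lambda>_. bernoulli_pmf q))" and X: "X = {H. S H}"
    using assms(1) unfolding Ymodel_def by (auto simp: set_bind_pmf)
  have "finite ?Good" using finite_ksub by simp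
  with S X assms(2) show "H \<in> ksub n (k+1)" "good k a H"
    using set_Pi_pmf_subset[of ?Good False] by auto
qed

lemma is_cocycle_if_good:
  assumes "\<And>H. H \<in> X \<Longrightarrow> H \<in> ksub n (k+1) \<and> good k a H"
  shows "is_cocycle X a"
  unfolding is_cocycle_def
proof
  fix H assume "H \<in> X"
  with assms have "card H = k + 1" "good k a H" by (auto simp: ksub_def)
  moreover from \<open>card H = k + 1\<close>
  have "{G. G \<subseteq> H \<and> card G + 1 = card H \<and> a G} = {F. F \<subseteq> H \<and> card F = k \<and> a F}" by auto
  ultimately show "\<not> cobdry a H" by (simp add: cobdry_def good_def)
qed

lemma is_cocycle_Ymodel: "(a, X) \<in> set_pmf (Ymodel k n q) \<Longrightarrow> is_cocycle X a"
  by (rule is_cocycle_if_good) (auto dest: set_pmf_Ymodel_good)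

definition far_from_coboundaries :: "nat \<Rightarrow> nat \<Rightarrow> real \<Rightarrow> (nat set \<Rightarrow> bool) \<Rightarrow> bool" where
  "far_from_coboundaries n k r f \<longleftrightarrow>
     (\<forall>g\<in>cochains n (k-1). r \<le> cnorm n k (\<lambda>F. f F \<noteq> cobdry g F))"

lemma class_norm_ge_if_far:
  "far_from_coboundaries n k r f \<Longrightarrow> r \<le> class_norm n k f"
  unfolding class_norm_def far_from_coboundaries_def
  by (rule cINF_greatest) (auto simp: cochains_def)

lemma cohom_nonzero_if_far:
  assumes "far_from_coboundaries n k r f" "r > 0" "f \<in> cochains n k" "is_cocycle X f"
  shows "cohom_nonzero n k X"
proof -
  have "\<exists>F\<in>ksub n k. f F \<noteq> cobdry g F" if "g \<in> cochains n (k-1)" for g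
  proof (rule ccontr)
    assume "\<not> ?thesis"
    then have "{F\<in>ksub n k. f F \<noteq> cobdry g F} = {}" by auto
    then have "cnorm n k (\<lambda>F. f F \<noteq> cobdry g F) = 0"
      unfolding cnorm_def \<open>{F\<in>ksub n k. f F \<noteq> cobdry g F} = {}\<close> by simp
    with assms(1,2) that show False by (auto simp: far_from_coboundaries_def)
  qed
  with assms(3,4) show ?thesis unfolding cohom_nonzero_def by blast
qed

lemma prob_far_from_coboundaries_ge:
  fixes e :: real
  assumes "k \<le> n" "e \<ge> 0"
  shows "1 - 2 ^ (n choose (k-1)) * exp (-2 * e\<^sup>2 * (n choose k))
         \<le> measure_pmf.prob (Pi_pmf (ksub n k) False (\<lambda>_. bernoulli_pmf (1/2)))
              {a. far_from_coboundaries n k (1/2 - e) a}"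
proof -
  let ?P = "Pi_pmf (ksub n k) False (\<lambda>_. bernoulli_pmf (1/2))"
  have N: "real (card (ksub n k)) > 0" using assms(1) by (simp add: card_ksub)
  then have "ksub n k \<noteq> {}" by auto
  have "{a. \<not> far_from_coboundaries n k (1/2 - e) a}
        = {a. \<exists>g\<in>cochains n (k-1).
                real (card {F\<in>ksub n k. a F \<noteq> cobdry g F}) < (1/2 - e) * card (ksub n k)}"
    using N by (auto simp: far_from_coboundaries_def cnorm_def not_le divide_less_eq)
  then have "measure_pmf.prob ?P {a. \<not> far_from_coboundaries n k (1/2 - e) a}
             \<le> card (cochains n (k-1)) * exp (-2 * e\<^sup>2 * card (ksub n k))"
    using prob_fair_coins_near_some[OF finite_ksub \<open>ksub n k \<noteq> {}\<close> assms(2) finite_cochains] by simp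
  also have "\<dots> \<le> 2 ^ (n choose (k-1)) * exp (-2 * e\<^sup>2 * (n choose k))"
    unfolding card_ksub
  proof (rule mult_right_mono)
    have "real (card (cochains n (k-1))) \<le> real (2 ^ (n choose (k-1)))"
      using card_cochains_le of_nat_le_iff by blast
    then show "real (card (cochains n (k-1))) \<le> 2 ^ (n choose (k-1))" by simp
  qed simp
  finally show ?thesis
    using measure_pmf.prob_compl[of "{a. \<not> far_from_coboundaries n k (1/2 - e) a}" ?P]
    by (simp add: set_diff_eq)
qed

lemma prob_Ymodel_ge_prob_far:
  assumes "0 < r" "s \<le> r"
  shows "measure_pmf.prob (Pi_pmf (ksub n k) False (\<lambda>_. bernoulli_pmf (1/2)))
           {a. far_from_coboundaries n k r a}
         \<le> measure_pmf.prob (Ymodel k n q)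
             {(a, X). is_cocycle X a \<and> class_norm n k a \<ge> s \<and> cohom_nonzero n k X}"
proof -
  let ?Y = "Ymodel k n q"
  let ?E = "{(a, X). is_cocycle X a \<and> class_norm n k a \<ge> s \<and> cohom_nonzero n k X}"
  have "(a, X) \<in> ?E" if far: "far_from_coboundaries n k r a" and Y: "(a, X) \<in> set_pmf ?Y" for a X
  proof -
    have "a \<in> set_pmf (map_pmf fst ?Y)" using Y by force
    then have "a \<in> cochains n k"
      unfolding map_fst_Ymodel by (rule Pi_pmf_ksub_in_cochains)
    moreover have "is_cocycle X a" using Y by (rule is_cocycle_Ymodel)
    ultimately show ?thesis
      using assms class_norm_ge_if_far[OF far] cohom_nonzero_if_far[OF far] by auto
  qed
  then have "{y. far_from_coboundaries n k r (fst y)} \<inter> set_pmf ?Y \<subseteq> ?E" by auto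
  then have "measure_pmf.prob ?Y {y. far_from_coboundaries n k r (fst y)} \<le> measure_pmf.prob ?Y ?E"
    by (subst (1 2) measure_Int_set_pmf[symmetric]) (auto intro: measure_pmf.finite_measure_mono)
  moreover have "measure_pmf.prob ?Y {y. far_from_coboundaries n k r (fst y)}
      = measure_pmf.prob (map_pmf fst ?Y) {a. far_from_coboundaries n k r a}"
    by (simp add: vimage_def)
  ultimately show ?thesis by (simp only: map_fst_Ymodel)
qed

lemma Suc_mult_choose_Suc: "j < n \<Longrightarrow> Suc j * (n choose Suc j) = (n - j) * (n choose j)"
  using binomial_absorption[of j n] binomial_absorb_comp[of n j] by simp

lemma choose_pred_le_choose:
  fixes e :: real
  assumes "1 \<le> k" "k \<le> n" "real k \<le> e\<^sup>2 * (real n - k + 1)"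
  shows "real (n choose (k-1)) \<le> e\<^sup>2 * (n choose k)"
proof -
  obtain j where j: "k = Suc j" "j < n" using assms(1,2) by (cases k) auto
  have "real (Suc j * (n choose Suc j)) = real ((n - j) * (n choose j))"
    by (simp only: Suc_mult_choose_Suc[OF j(2)])
  then have "real k * (n choose k) = (real n - k + 1) * (n choose (k-1))"
    using j by (simp add: of_nat_diff distrib_right)
  moreover have "real k * (n choose k) \<le> e\<^sup>2 * (real n - k + 1) * (n choose k)"
    using assms(3) by (intro mult_right_mono) auto
  ultimately have "(real n - k + 1) * (n choose (k-1)) \<le> (real n - k + 1) * (e\<^sup>2 * (n choose k))"
    by (simp add: algebra_simps)
  moreover have "real n - k + 1 > 0" using assms(2) by simp
  ultimately show ?thesis by (rule mult_left_le_imp_le)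
qed

lemma two_pow_choose_mul_exp_tendsto_0:
  fixes e :: real
  assumes "1 \<le> k" "0 < e"
  shows "(\<lambda>n. 2 ^ (n choose (k-1)) * exp (-2 * e\<^sup>2 * (n choose k))) \<longlonglongrightarrow> 0"
proof (rule tendsto_sandwich)
  show "eventually (\<lambda>n. 0 \<le> 2 ^ (n choose (k-1)) * exp (-2 * e\<^sup>2 * (n choose k))) sequentially"
    by simp
  have "eventually (\<lambda>n. k \<le> n \<and> real k \<le> e\<^sup>2 * (real n - k + 1)) sequentially"
    using assms by (intro eventually_conj eventually_ge_at_top) real_asymp
  then show "eventually (\<lambda>n. 2 ^ (n choose (k-1)) * exp (-2 * e\<^sup>2 * (n choose k))
                             \<le> exp (- e\<^sup>2 * (n / k))) sequentially"
  proof eventually_elim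
    case (elim n)
    let ?N = "real (n choose k)" and ?M = "real (n choose (k-1))"
    have "real n / k = (real n / k) ^ 1" by simp
    also have "\<dots> \<le> (real n / k) ^ k"
      using elim assms(1) by (intro power_increasing) (auto simp: field_simps)
    also have "\<dots> \<le> ?N" using elim by (intro binomial_ge_n_over_k_pow_k) simp
    finally have "e\<^sup>2 * (real n / k) \<le> e\<^sup>2 * ?N" by (rule mult_left_mono) simp
    moreover have "?M \<le> e\<^sup>2 * ?N" using elim assms(1) by (intro choose_pred_le_choose) auto
    moreover have "(2::real) ^ (n choose (k-1)) = exp (?M * ln 2)"
      by (simp add: exp_of_nat_mult)
    ultimately have "2 ^ (n choose (k-1)) * exp (-2 * e\<^sup>2 * ?N) \<le> exp ?M * exp (-2 * e\<^sup>2 * ?N)"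
      using ln_2_less_1 by (simp add: mult_left_le)
    also have "\<dots> = exp (?M - 2 * e\<^sup>2 * ?N)" by (simp add: exp_add[symmetric])
    also have "\<dots> \<le> exp (- e\<^sup>2 * (n / k))"
      using \<open>?M \<le> e\<^sup>2 * ?N\<close> \<open>e\<^sup>2 * (real n / k) \<le> e\<^sup>2 * ?N\<close> by simp
    finally show ?case .
  qed
  show "(\<lambda>n. exp (- e\<^sup>2 * (real n / k))) \<longlonglongrightarrow> 0"
    using assms by real_asymp
qed simp

theorem mainTheorem13:
  fixes k :: nat and p :: "nat \<Rightarrow> real" and \<epsilon> :: real
  assumes "k \<ge> 2"
    and "\<And>n. 0 \<le> p n \<and> p n \<le> 1"
    and "\<epsilon> > 0"
  shows "(\<lambda>n. measure_pmf.prob (Ymodel k n (p n))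
            {(a, Xk). is_cocycle Xk a \<and> class_norm n k a \<ge> 1/2 - \<epsilon>
                      \<and> cohom_nonzero n k Xk})
         \<longlonglongrightarrow> 1"
proof (rule tendsto_sandwich[where h = "\<lambda>_. 1"])
  define e where "e = min \<epsilon> (1/4)" \<comment> \<open>keeps \<open>1/2 - e\<close> positive\<close>
  have e: "0 < e" "e \<le> \<epsilon>" "e \<le> 1/4" using assms(3) by (auto simp: e_def)
  let ?bound = "\<lambda>n. 2 ^ (n choose (k-1)) * exp (-2 * e\<^sup>2 * (n choose k))"
  show "eventually (\<lambda>n. 1 - ?bound n \<le> measure_pmf.prob (Ymodel k n (p n))
          {(a, Xk). is_cocycle Xk a \<and> class_norm n k a \<ge> 1/2 - \<epsilon> \<and> cohom_nonzero n k Xk}) sequentially"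
    using eventually_ge_at_top[of k]
  proof eventually_elim
    case (elim n)
    have "1 - ?bound n \<le> measure_pmf.prob (Pi_pmf (ksub n k) False (\<lambda>_. bernoulli_pmf (1/2)))
                             {a. far_from_coboundaries n k (1/2 - e) a}"
      using elim e by (intro prob_far_from_coboundaries_ge) auto
    also have "\<dots> \<le> measure_pmf.prob (Ymodel k n (p n))
          {(a, Xk). is_cocycle Xk a \<and> class_norm n k a \<ge> 1/2 - \<epsilon> \<and> cohom_nonzero n k Xk}"
      using e by (intro prob_Ymodel_ge_prob_far) auto
    finally show ?case .
  qed
  show "(\<lambda>n. 1 - ?bound n) \<longlonglongrightarrow> 1"
    using tendsto_diff[OF tendsto_const two_pow_choose_mul_exp_tendsto_0[of k e]] assms(1) e by simp
qed simp_all

end
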